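(* Let $\mathcal{G}(t)$ be a matrix-weighted switching network satisfying Assumption 1 (described in the context), and consider $\dot{\boldsymbol{x}}(t)=-L(t)\boldsymbol{x}(t)$, $\boldsymbol{x}(t)\in\mathbb{R}^{dn}$. Let $\Psi=[\boldsymbol{\varphi}_1,\dots,\boldsymbol{\varphi}_m]\in\mathbb{R}^{d\times m}$ have mutually orthogonal unit columns, and let $C=\mathrm{diag}(\sigma_1,\dots,\sigma_n)\in\mathbb{R}^{dn\times dn}$ with each $\sigma_i\in\{I_d,-I_d\}$. Suppose there exist a subsequence $\{t_{k_l}\}_{l\in\mathbb{N}}$ of $\{t_k\}$ with $t_{k_0}=t_0$ and $\Delta t_{k_l}=t_{k_{l+1}}-t_{k_l}<\infty$, and a scalar $q\in(0,1)$, such that for all $l\in\mathbb{N}$, $\mathrm{null}(\widetilde{L}_{[t_{k_l},t_{k_{l+1}})})$ equals the column space of $C(\boldsymbol{1}_n\otimes\Psi)$ and $\mu_{m+1}\big(\Phi(t_{k_{l+1}},t_{k_l})^\top\Phi(t_{k_{l+1}},t_{k_l})\big)\le q$. Then the system admits bipartite consensus, and the bipartite consensus value is $$\boldsymbol{x}^*=C\Big(\boldsymbol{1}_n\otimes\Big(\tfrac{1}{n}\Psi(\boldsymbol{1}_n^\top\otimes\Psi^\top)C\boldsymbol{x}(t_0)\Big)\Big).$$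
   Context: A matrix-weighted switching network $\mathcal{G}(t)=(\mathcal{V},\mathcal{E}(t),A(t))$ has node set $\mathcal{V}=\{1,\dots,n\}$, $n>1$; each edge $(i,j)\in\mathcal{E}(t)$ carries a symmetric weight $A_{ij}(t)\in\mathbb{R}^{d\times d}$ which is either positive (semi-)definite or negative (semi-)definite, with $A_{ij}=A_{ji}$, $A_{ii}=0$, $A_{ij}(t)=0$ if $(i,j)\notin\mathcal{E}(t)$; standing assumption: for each pair $(i,j)$ the weight $A_{ij}(t)$ has the same sign type for all $t$. Set $|A_{ij}|=A_{ij}$ if $A_{ij}\succeq0$ and $-A_{ij}$ if $A_{ij}\preceq0$; $\mathrm{sgn}(A)$ is $1$, $-1$, $0$ for nonzero PSD, nonzero NSD, zero $A$. With $A=[A_{ij}]\in\mathbb{R}^{dn\times dn}$ and $D=\mathrm{diag}(D_1,\dots,D_n)$, $D_i=\sum_{j:(i,j)\in\mathcal{E}}|A_{ij}|$, the matrix-valued Laplacian is $L=D-A$; $\dot{\boldsymbol{x}}=-L(t)\boldsymbol{x}$ is the stacked form of $\dot{\boldsymbol{x}}_i=-\sum_j|A_{ij}|(\boldsymbol{x}_i-\mathrm{sgn}(A_{ij})\boldsymbol{x}_j)$. The initial time is $t_0=0$. Assumption 1: there is a sequence $\{t_k\}_{k\in\mathbb{N}}$ with $t_0=0$, $t_k\to\infty$, $t_{k+1}-t_k\ge\alpha>0$, and $\mathcal{G}(t)$ is constant on each $[t_k,t_{k+1})$, with Laplacian $L^k$ there and $\Delta t_k=t_{k+1}-t_k$.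 For $k'<k''$: $\widetilde{L}_{[t_{k'},t_{k''})}=\frac{1}{t_{k''}-t_{k'}}\int_{t_{k'}}^{t_{k''}}L(t)dt$, and $\Phi(t_{k''},t_{k'})=e^{-L^{k''-1}\Delta t_{k''-1}}\cdots e^{-L^{k'}\Delta t_{k'}}$; $\mu_{m+1}(P)$ denotes the $(m+1)$-th largest eigenvalue of the symmetric matrix $P$. Bipartite consensus: cluster consensus with exactly two clusters, i.e. all limits $\lim_{t\to\infty}\boldsymbol{x}_i(t)$ exist and there is a partition of $\mathcal{V}$ into two parts such that agents in the same part have equal limits and agents in different parts have different limits. *)

theory Defs
  imports "HOL-Analysis.Analysis" "HOL-Computational_Algebra.Polynomial"
begin

(* Agents (nodes) are indexed by a finite type 'n, vector components by a finite type 'd.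
   The stacked state vector x in R^{dn} is indexed by pairs (i,a) :: 'n \<times> 'd
   (agent i, component a), so x_i = (\<chi> a. x $ (i,a)). *)

type_synonym ('n,'d) stvec = "real ^ ('n \<times> 'd)"
type_synonym ('n,'d) stmat = "real ^ ('n \<times> 'd) ^ ('n \<times> 'd)"

definition psd :: "real^'d^'d \<Rightarrow> bool" where
  "psd M \<longleftrightarrow> (\<forall>v. 0 \<le> v \<bullet> (M *v v))"

definition nsd :: "real^'d^'d \<Rightarrow> bool" where
  "nsd M \<longleftrightarrow> (\<forall>v. v \<bullet> (M *v v) \<le> 0)"

definition mabs :: "real^'d^'d \<Rightarrow> real^'d^'d" where
  "mabs M = (if psd M then M else - M)"

text \<open>Matrix-valued Laplacian L = D - A of the weights W (block (i,j) is
  [i=j] D_i - W i j with D_i = sum_j |W i j|).\<close>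
definition laplacian :: "('n::finite \<Rightarrow> 'n \<Rightarrow> real^'d^'d) \<Rightarrow> ('n,'d::finite) stmat" where
  "laplacian W = (\<chi> p q. (case p of (i,a) \<Rightarrow> case q of (j,b) \<Rightarrow>
      (if i = j then (\<Sum>k\<in>UNIV. mabs (W i k)) $ a $ b else 0) - W i j $ a $ b))"

fun matpow :: "real^'k^'k \<Rightarrow> nat \<Rightarrow> real^'k^'k" where
  "matpow M 0 = mat 1"
| "matpow M (Suc k) = M ** matpow M k"

definition mexp :: "real^'k^'k \<Rightarrow> real^'k^'k" where
  "mexp M = (\<Sum>k. (1 / fact k) *\<^sub>R matpow M k)"

text \<open>Phi(t_{k'+j}, t_{k'}) = e^{-L^{k'+j-1} Dt_{k'+j-1}} ... e^{-L^{k'} Dt_{k'}},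
  where Lk k is the Laplacian on [t_k, t_{k+1}).\<close>
fun trans_mat :: "(nat \<Rightarrow> real^'k^'k) \<Rightarrow> (nat \<Rightarrow> real) \<Rightarrow> nat \<Rightarrow> nat \<Rightarrow> real^'k^'k" where
  "trans_mat Lk tk k' 0 = mat 1"
| "trans_mat Lk tk k' (Suc j) =
     mexp (- ((tk (k' + j + 1) - tk (k' + j)) *\<^sub>R Lk (k' + j))) ** trans_mat Lk tk k' j"

definition Phi :: "(nat \<Rightarrow> real^'k^'k) \<Rightarrow> (nat \<Rightarrow> real) \<Rightarrow> nat \<Rightarrow> nat \<Rightarrow> real^'k^'k" where
  "Phi Lk tk k'' k' = trans_mat Lk tk k' (k'' - k')"

definition avg_lap :: "(real \<Rightarrow> real^'k^'k) \<Rightarrow> real \<Rightarrow> real \<Rightarrow> real^'k^'k" where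
  "avg_lap L a b = (1 / (b - a)) *\<^sub>R integral {a..b} L"

definition null_space :: "real^'c^'r \<Rightarrow> (real^'c) set" where
  "null_space M = {v. M *v v = 0}"

definition col_space :: "real^'c^'r \<Rightarrow> (real^'r) set" where
  "col_space M = range (\<lambda>y. M *v y)"

text \<open>Characteristic polynomial det(xI - P) and eigenvalues listed in
  non-increasing order with multiplicity; mu j P = j-th largest eigenvalue (j \<ge> 1).\<close>
definition charpoly :: "real^'k^'k \<Rightarrow> real poly" where
  "charpoly P = det (\<chi> i j. (if i = j then [:0, 1:] else 0) - [:P $ i $ j:])"

definition eigs_desc :: "real^'k^'k \<Rightarrow> real list" where
  "eigs_desc P = rev (sorted_list_of_multiset (proots (charpoly P)))"

definition mu :: "nat \<Rightarrow> real^'k^'k \<Rightarrow> real" where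
  "mu j P = eigs_desc P ! (j - 1)"

definition ones_kron :: "real^'c^'d \<Rightarrow> real^'c^('n::finite \<times> 'd::finite)" where
  "ones_kron M = (\<chi> p c. M $ snd p $ c)"

definition ones_kron_vec :: "real^'d \<Rightarrow> real^('n::finite \<times> 'd::finite)" where
  "ones_kron_vec v = (\<chi> p. v $ snd p)"

definition sign_diag :: "('n::finite \<Rightarrow> real) \<Rightarrow> ('n,'d::finite) stmat" where
  "sign_diag s = (\<chi> p q. if p = q then s (fst p) else 0)"

definition agent :: "real^('n::finite \<times> 'd::finite) \<Rightarrow> 'n \<Rightarrow> real^'d" where
  "agent v i = (\<chi> a. v $ (i,a))"

definition bipartite_consensus :: "(real \<Rightarrow> real^('n::finite \<times> 'd::finite)) \<Rightarrow> bool" where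
  "bipartite_consensus x \<longleftrightarrow>
     (\<forall>i. \<exists>\<xi>. ((\<lambda>t. agent (x t) i) \<longlongrightarrow> \<xi>) at_top) \<and>
     (\<exists>S. S \<noteq> {} \<and> S \<noteq> UNIV \<and>
        (\<forall>i j. (i \<in> S \<longleftrightarrow> j \<in> S) \<longrightarrow>
               Lim at_top (\<lambda>t. agent (x t) i) = Lim at_top (\<lambda>t. agent (x t) j)) \<and>
        (\<forall>i j. (i \<in> S) \<noteq> (j \<in> S) \<longrightarrow>
               Lim at_top (\<lambda>t. agent (x t) i) \<noteq> Lim at_top (\<lambda>t. agent (x t) j)))"

end

theory Submission
  imports Defs
begin

(* Over each switching interval the state is x(t_{k+1}) = e^{-L^k Delta t_k} x(t_k), and since every
   Laplacian is symmetric positive semidefinite this flow never increases |x|.  The columns of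
   B = C (1_n (x) Psi) span the kernel of every averaged Laplacian; as the Laplacians are positive
   semidefinite, they then lie in the kernel of every single Laplacian L^k.  Hence they are fixed by
   Phi and Phi^T, the orthogonal projection x* = (1/n) B B^T x(0) of the state onto their span is
   invariant, and the error x - x* stays orthogonal to them.  On that orthogonal complement Phi
   contracts: a vector e there with |Phi e|^2 > q |e|^2 would, by a Rayleigh-quotient argument,
   yield an eigenvector of Phi^T Phi with eigenvalue above q orthogonal to the m columns (which
   have eigenvalue 1), i.e. m + 1 eigenvalues above q, contradicting mu_{m+1} <= q.  So |x - x*|^2
   decays at least like q^l, and x* has the agent components s_i v with s_i = +-1. *)

section \<open>Matrices and quadratic forms\<close>

lemma sum_UNIV_prod:
  "(\<Sum>p\<in>(UNIV::('a::finite \<times> 'b::finite) set). f p) = (\<Sum>i\<in>UNIV. \<Sum>a\<in>UNIV. f (i, a))"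
  by (simp add: UNIV_Times_UNIV[symmetric] sum.cartesian_product del: UNIV_Times_UNIV)

lemma sum_matrix_vector_mult: "(\<Sum>k\<in>K. M k) *v v = (\<Sum>k\<in>K. M k *v (v::real^'c::finite))"
  by (induction K rule: infinite_finite_induct) (simp_all add: matrix_vector_mult_add_rdistrib)

lemma uminus_matrix_vector_mult: "(- M) *v v = - (M *v (v::real^'k::finite))"
  by (simp add: vec_eq_iff matrix_vector_mult_def sum_negf)

lemma transpose_uminus: "transpose (- M) = - transpose M"
  by (simp add: transpose_def vec_eq_iff)

lemma matrix_vector_mult_axis_nth: "(H *v axis j (1::real)) $ i = H$i$j"
  by (simp add: matrix_vector_mult_def axis_def if_distrib if_distribR cong: if_cong)

lemma mat_matrix_vector_mult: "mat c *v (v::real^'k::finite) = c *\<^sub>R v"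
  by (simp add: vec_eq_iff mat_def matrix_vector_mult_def if_distrib if_distribR cong: if_cong)

lemma matrix_mul_diff_distrib_left: "(A::'a::ring_1^'k::finite^'j::finite) ** (B - C) = A ** B - A ** C"
  by (simp add: vec_eq_iff matrix_matrix_mult_def sum_subtractf algebra_simps)

lemma matrix_mul_diff_distrib_right: "((B::'a::ring_1^'k::finite^'j::finite) - C) ** A = B ** A - C ** A"
  by (simp add: vec_eq_iff matrix_matrix_mult_def sum_subtractf algebra_simps)

lemma mat_matrix_mul_commute: "(A::'a::comm_ring_1^'k::finite^'k) ** mat x = mat x ** A"
proof -
  have "A ** mat x = (\<chi> i j. A$i$j * x)"
    by (simp add: vec_eq_iff matrix_matrix_mult_def mat_def if_distrib if_distribR cong: if_cong)
  moreover have "mat x ** A = (\<chi> i j. x * A$i$j)"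
    by (simp add: vec_eq_iff matrix_matrix_mult_def mat_def if_distrib if_distribR cong: if_cong)
  ultimately show ?thesis by (simp add: mult.commute)
qed

lemma bounded_linear_matrix_vector_mult_left:
  "bounded_linear (\<lambda>A::real^'k::finite^'j::finite. A *v v)"
proof -
  have "linear (\<lambda>A::real^'k::finite^'j::finite. A *v v)"
    by (rule linearI) (simp_all add: matrix_vector_mult_add_rdistrib scaleR_matrix_vector_assoc)
  then show ?thesis by (simp add: linear_conv_bounded_linear)
qed

lemma subspace_range_matrix_vector_mult: "subspace (range ((*v) (Q::real^'k::finite^'j::finite)))"
  by (rule linear_subspace_image[OF matrix_vector_mul_linear subspace_UNIV])

lemma norm_matrix_vector_mult_le: "norm (M *v v) \<le> onorm ((*v) M) * norm (v::real^'k::finite)"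
  for M :: "real^'k^'j::finite"
  by (rule onorm[OF matrix_vector_mul_bounded_linear])

lemma onorm_matrix_vector_nonneg: "0 \<le> onorm ((*v) (M::real^'k::finite^'j::finite))"
  by (rule onorm_pos_le[OF matrix_vector_mul_bounded_linear])

lemma norm_matrix_le_sum_abs: "norm (A::real^'k::finite^'j::finite) \<le> (\<Sum>i\<in>UNIV. \<Sum>j\<in>UNIV. \<bar>A$i$j\<bar>)"
proof -
  have "norm A = L2_set (\<lambda>i. norm (A$i)) UNIV" by (simp add: norm_vec_def)
  also have "\<dots> \<le> (\<Sum>i\<in>UNIV. norm (A$i))" by (rule L2_set_le_sum) auto
  also have "\<dots> \<le> (\<Sum>i\<in>UNIV. \<Sum>j\<in>UNIV. \<bar>A$i$j\<bar>)" by (intro sum_mono norm_le_l1_cart)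
  finally show ?thesis .
qed

lemma inner_transpose_matrix_vector: "u \<bullet> (transpose A *v z) = (A *v u) \<bullet> (z::real^'j::finite)"
  for A :: "real^'k::finite^'j"
proof -
  have "u \<bullet> (transpose A *v z) = (z v* A) \<bullet> u" by (simp add: inner_commute)
  also have "\<dots> = z \<bullet> (A *v u)" by (rule dot_lmul_matrix)
  finally show ?thesis by (simp add: inner_commute)
qed

lemma inner_symmetric_matrix_vector:
  fixes M :: "real^'k::finite^'k"
  assumes "transpose M = M"
  shows "u \<bullet> (M *v w) = w \<bullet> (M *v u)"
  using inner_transpose_matrix_vector[of u M w] assms by (simp add: inner_commute)

lemma inner_scaleR_matrix_vector:
  "(c *\<^sub>R y) \<bullet> (G *v (c *\<^sub>R y)) = c\<^sup>2 * (y \<bullet> (G *v (y::real^'k::finite)))"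
  by (simp add: matrix_vector_mult_scaleR power2_eq_square)

lemma inner_column_projection:
  fixes B :: "real^'m::finite^'k::finite"
  assumes gram: "transpose B ** B = c *\<^sub>R mat 1" and "c \<noteq> 0"
  shows "column j B \<bullet> ((1 / c) *\<^sub>R (B *v (transpose B *v v))) = column j B \<bullet> v"
proof -
  have column: "column j B \<bullet> u = (transpose B *v u) $ j" for u
    by (simp add: inner_vec_def matrix_vector_mult_def column_def transpose_def mult.commute)
  show ?thesis
    using assms by (simp add: column matrix_vector_mult_scaleR matrix_vector_mul_assoc
        scaleR_matrix_vector_assoc[symmetric] mat_matrix_vector_mult)
qed

lemma eigenvector_of_quadratic_form_max:
  fixes G :: "real^'k::finite^'k"
  assumes sym: "transpose G = G" and S: "subspace S" and inv: "\<And>y. y \<in> S \<Longrightarrow> G *v y \<in> S"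
    and bound: "\<And>z. z \<in> S \<Longrightarrow> z \<bullet> (G *v z) \<le> lam * (z \<bullet> z)"
    and e: "e \<in> S" and attained: "e \<bullet> (G *v e) = lam * (e \<bullet> e)"
  shows "G *v e = lam *\<^sub>R e"
proof -
  define w where "w = G *v e - lam *\<^sub>R e"
  define c where "c = w \<bullet> w"
  define D where "D = lam * c - w \<bullet> (G *v w)"
  have wS: "w \<in> S" unfolding w_def using inv[OF e] e S by (simp add: subspace_diff subspace_scale)
  have ew: "e \<bullet> w = 0" by (simp add: w_def inner_diff_right attained)
  have wGe: "w \<bullet> (G *v e) = c"
  proof -
    have "G *v e = w + lam *\<^sub>R e" by (simp add: w_def)
    then show ?thesis using ew by (simp add: c_def inner_add_right inner_commute)
  qed
  \<comment> \<open>maximality of \<open>e\<close> tested along \<open>e + t w\<close> forces the first-order term \<open>2 t c\<close> to vanish\<close>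
  have first_order: "2 * c \<le> t * D" if t: "t > 0" for t
  proof -
    define z where "z = e + t *\<^sub>R w"
    have "z \<in> S" unfolding z_def using e wS S by (simp add: subspace_add subspace_scale)
    moreover have "z \<bullet> (G *v z) = lam * (e \<bullet> e) + 2 * t * c + t\<^sup>2 * (w \<bullet> (G *v w))"
    proof -
      have "z \<bullet> (G *v z) = e \<bullet> (G *v e) + t * (e \<bullet> (G *v w)) + t * (w \<bullet> (G *v e)) + t\<^sup>2 * (w \<bullet> (G *v w))"
        by (simp add: z_def power2_eq_square algebra_simps)
      then show ?thesis
        using inner_symmetric_matrix_vector[OF sym, of e w] by (simp add: wGe attained)
    qed
    moreover have "z \<bullet> z = e \<bullet> e + t\<^sup>2 * c"
      by (simp add: z_def inner_add_left inner_add_right ew inner_commute[of w e] c_def power2_eq_square)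
    ultimately have "t * (2 * c) \<le> t * (t * D)"
      using bound[of z] by (simp add: D_def power2_eq_square algebra_simps)
    then show ?thesis using t by simp
  qed
  have "c = 0"
  proof (rule ccontr)
    assume "c \<noteq> 0"
    then have c_pos: "c > 0" by (simp add: c_def)
    define t where "t = c / (\<bar>D\<bar> + 1)"
    have t_pos: "t > 0" using c_pos by (simp add: t_def add_pos_nonneg)
    have "t * D \<le> t * \<bar>D\<bar>" using t_pos by (intro mult_left_mono) auto
    also have "t * \<bar>D\<bar> = c * (\<bar>D\<bar> / (\<bar>D\<bar> + 1))" by (simp add: t_def)
    also have "\<dots> < c * 1" using c_pos by (intro mult_strict_left_mono) auto
    finally show False using first_order[OF t_pos] c_pos by simp
  qed
  then show ?thesis by (simp add: c_def w_def)
qed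

lemma psd_kernel_of_quadratic_form_zero:
  fixes M :: "real^'k::finite^'k"
  assumes "transpose M = M" "psd M" "v \<bullet> (M *v v) = 0"
  shows "M *v v = 0"
proof -
  have "(- M) *v v = 0 *\<^sub>R v"
    by (rule eigenvector_of_quadratic_form_max[where S = UNIV])
      (use assms in \<open>auto simp: transpose_uminus uminus_matrix_vector_mult psd_def\<close>)
  then show ?thesis by (simp add: uminus_matrix_vector_mult)
qed

lemma eigenvector_above_in_invariant_subspace:
  fixes G :: "real^'k::finite^'k"
  assumes sym: "transpose G = G" and S: "subspace S" and inv: "\<And>y. y \<in> S \<Longrightarrow> G *v y \<in> S"
    and y: "y \<in> S" and above: "q * (y \<bullet> y) < y \<bullet> (G *v y)"
  obtains e lam where "e \<in> S" "e \<noteq> 0" "G *v e = lam *\<^sub>R e" "q < lam"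
proof -
  define f where "f z = z \<bullet> (G *v z)" for z
  define K where "K = sphere 0 1 \<inter> S"
  have "compact K" unfolding K_def by (intro compact_Int_closed compact_sphere closed_subspace S)
  moreover have y_nz: "y \<noteq> 0" using above by auto
  then have y_unit: "(1 / norm y) *\<^sub>R y \<in> K" using y S by (simp add: K_def subspace_scale)
  moreover have "continuous_on K f"
    unfolding f_def by (intro continuous_on_inner continuous_on_id linear_continuous_on
        matrix_vector_mul_bounded_linear)
  ultimately obtain e where eK: "e \<in> K" and e_max: "\<And>z. z \<in> K \<Longrightarrow> f z \<le> f e"
    using continuous_attains_sup[of K f] by blast
  have eS: "e \<in> S" and e_unit: "e \<bullet> e = 1" using eK by (auto simp: K_def dot_square_norm)
  have bound: "f z \<le> f e * (z \<bullet> z)" if "z \<in> S" for z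
  proof (cases "z = 0")
    case False
    have "(1 / norm z) *\<^sub>R z \<in> K" using that False S by (simp add: K_def subspace_scale)
    then have "f ((1 / norm z) *\<^sub>R z) \<le> f e" by (rule e_max)
    then have "(1 / norm z)\<^sup>2 * f z \<le> f e" by (simp only: f_def inner_scaleR_matrix_vector)
    then show ?thesis using False by (simp add: field_simps dot_square_norm)
  qed (simp add: f_def)
  have "q < (1 / norm y)\<^sup>2 * f y"
    using above y_nz by (simp add: f_def dot_square_norm field_simps)
  also have "\<dots> \<le> f e" using e_max[OF y_unit] by (simp only: f_def inner_scaleR_matrix_vector)
  finally have "q < f e" .
  moreover have "G *v e = f e *\<^sub>R e"
    by (rule eigenvector_of_quadratic_form_max[OF sym S inv _ eS]) (use bound e_unit in \<open>auto simp: f_def\<close>)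
  moreover have "e \<noteq> 0" using e_unit by auto
  ultimately show ?thesis using that eS by blast
qed

section \<open>Matrix-valued Laplacians\<close>

lemma inner_block_matrix_vector:
  fixes M :: "real^('n::finite \<times> 'd::finite)^('n \<times> 'd)"
  shows "v \<bullet> (M *v w) =
    (\<Sum>i\<in>UNIV. \<Sum>j\<in>UNIV. agent v i \<bullet> ((\<chi> a b. M $ (i, a) $ (j, b)) *v agent w j))"
proof -
  have "v \<bullet> (M *v w)
      = (\<Sum>i\<in>UNIV. \<Sum>a\<in>UNIV. \<Sum>j\<in>UNIV. \<Sum>b\<in>UNIV. v $ (i, a) * (M $ (i, a) $ (j, b) * w $ (j, b)))"
    by (simp add: inner_vec_def matrix_vector_mult_def sum_UNIV_prod sum_distrib_left)
  also have "\<dots>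
      = (\<Sum>i\<in>UNIV. \<Sum>j\<in>UNIV. \<Sum>a\<in>UNIV. \<Sum>b\<in>UNIV. v $ (i, a) * (M $ (i, a) $ (j, b) * w $ (j, b)))"
    by (intro sum.cong refl sum.swap)
  finally show ?thesis
    by (simp add: inner_vec_def matrix_vector_mult_def agent_def sum_distrib_left)
qed

lemma laplacian_quadratic_form:
  fixes W :: "'n::finite \<Rightarrow> 'n \<Rightarrow> real^'d::finite^'d"
  shows "v \<bullet> (laplacian W *v v) =
    (\<Sum>i\<in>UNIV. \<Sum>j\<in>UNIV. agent v i \<bullet> (mabs (W i j) *v agent v i) - agent v i \<bullet> (W i j *v agent v j))"
proof -
  have blocks: "(\<chi> a b. laplacian W $ (i, a) $ (j, b))
      = (if i = j then (\<Sum>k\<in>UNIV. mabs (W i k)) else 0) - W i j" for i j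
    by (simp add: laplacian_def vec_eq_iff)
  have diag: "u \<bullet> ((\<Sum>k\<in>UNIV. mabs (W i k)) *v u') = (\<Sum>k\<in>UNIV. u \<bullet> (mabs (W i k) *v u'))" for i u u'
    by (simp add: sum_matrix_vector_mult inner_sum_right)
  have "(\<Sum>j\<in>UNIV. agent v i \<bullet> ((if i = j then (\<Sum>k\<in>UNIV. mabs (W i k)) else 0) *v agent v j))
      = (\<Sum>j\<in>UNIV. agent v i \<bullet> (mabs (W i j) *v agent v i))" for i
    by (simp add: if_distrib if_distribR diag cong: if_cong)
  then show ?thesis
    unfolding inner_block_matrix_vector blocks
    by (simp add: matrix_vector_mult_diff_rdistrib inner_diff_right sum_subtractf)
qed

lemma cross_term_le_mabs:
  fixes M :: "real^'k::finite^'k"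
  assumes sym: "transpose M = M" and sign: "psd M \<or> nsd M"
  shows "2 * (a \<bullet> (M *v b)) \<le> a \<bullet> (mabs M *v a) + b \<bullet> (mabs M *v b)"
proof (cases "psd M")
  case True
  have "(a - b) \<bullet> (M *v (a - b)) = a \<bullet> (M *v a) + b \<bullet> (M *v b) - 2 * (a \<bullet> (M *v b))"
    using inner_symmetric_matrix_vector[OF sym, of b a]
    by (simp add: matrix_vector_mult_diff_distrib inner_diff_left inner_diff_right)
  moreover have "0 \<le> (a - b) \<bullet> (M *v (a - b))" using True by (simp add: psd_def)
  ultimately show ?thesis using True by (simp add: mabs_def)
next
  case False
  have "(a + b) \<bullet> (M *v (a + b)) = a \<bullet> (M *v a) + b \<bullet> (M *v b) + 2 * (a \<bullet> (M *v b))"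
    using inner_symmetric_matrix_vector[OF sym, of b a]
    by (simp add: matrix_vector_right_distrib inner_add_left inner_add_right)
  moreover have "(a + b) \<bullet> (M *v (a + b)) \<le> 0" using False sign by (simp add: nsd_def)
  ultimately show ?thesis using False by (simp add: mabs_def uminus_matrix_vector_mult)
qed

lemma psd_laplacian:
  fixes W :: "'n::finite \<Rightarrow> 'n \<Rightarrow> real^'d::finite^'d"
  assumes sym: "\<And>i j. transpose (W i j) = W i j"
    and undirected: "\<And>i j. W i j = W j i"
    and sign: "\<And>i j. psd (W i j) \<or> nsd (W i j)"
  shows "psd (laplacian W)"
  unfolding psd_def
proof
  fix v :: "real^('n \<times> 'd)"
  define f where
    "f i j = agent v i \<bullet> (mabs (W i j) *v agent v i) - agent v i \<bullet> (W i j *v agent v j)" for i j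
  have "0 \<le> f i j + f j i" for i j
    using cross_term_le_mabs[OF sym sign, of "agent v i" i j "agent v j"]
      inner_symmetric_matrix_vector[OF sym, of "agent v j" i j "agent v i"]
    by (simp add: f_def undirected[of j i])
  then have "0 \<le> (\<Sum>i\<in>UNIV. \<Sum>j\<in>UNIV. f i j + f j i)"
    by (intro sum_nonneg)
  also have "\<dots> = (\<Sum>i\<in>UNIV. \<Sum>j\<in>UNIV. f i j) + (\<Sum>i\<in>UNIV. \<Sum>j\<in>UNIV. f j i)"
    by (simp add: sum.distrib)
  also have "(\<Sum>i\<in>UNIV. \<Sum>j\<in>UNIV. f j i) = (\<Sum>i\<in>UNIV. \<Sum>j\<in>UNIV. f i j)"
    by (rule sum.swap)
  also have "(\<Sum>i\<in>UNIV. \<Sum>j\<in>UNIV. f i j) = v \<bullet> (laplacian W *v v)"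
    by (simp add: laplacian_quadratic_form f_def)
  finally show "0 \<le> v \<bullet> (laplacian W *v v)" by simp
qed

lemma laplacian_symmetric:
  fixes W :: "'n::finite \<Rightarrow> 'n \<Rightarrow> real^'d::finite^'d"
  assumes sym: "\<And>i j. transpose (W i j) = W i j"
    and undirected: "\<And>i j. W i j = W j i"
  shows "transpose (laplacian W) = laplacian W"
proof -
  have mabs_entry: "mabs (W i j) $ b $ a = mabs (W i j) $ a $ b" for i j a b
  proof -
    have "transpose (mabs (W i j)) $ a $ b = mabs (W i j) $ a $ b"
      using sym[of i j] by (simp add: mabs_def transpose_uminus)
    then show ?thesis by (simp add: transpose_def)
  qed
  have W_entry: "W j i $ b $ a = W i j $ a $ b" for i j a b
  proof -
    have "transpose (W i j) $ a $ b = W i j $ a $ b" using sym[of i j] by simp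
    then show ?thesis using undirected[of j i] by (simp add: transpose_def)
  qed
  show ?thesis
    unfolding vec_eq_iff
  proof (intro allI)
    fix p q :: "'n \<times> 'd"
    obtain i a j b where "p = (i, a)" "q = (j, b)" by force
    then show "transpose (laplacian W) $ p $ q = laplacian W $ p $ q"
      by (simp add: transpose_def laplacian_def mabs_entry W_entry)
  qed
qed

section \<open>The matrix exponential and linear flows\<close>

lemma matpow_Suc_matrix_vector: "matpow M (Suc n) *v v = M *v (matpow M n *v v)"
  by (simp add: matrix_vector_mul_assoc)

lemma norm_matpow_matrix_vector_le:
  "norm (matpow M n *v v) \<le> onorm ((*v) M) ^ n * norm (v::real^'k::finite)"
proof (induction n)
  case (Suc n)
  have "norm (matpow M (Suc n) *v v) \<le> onorm ((*v) M) * norm (matpow M n *v v)"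
    unfolding matpow_Suc_matrix_vector by (rule norm_matrix_vector_mult_le)
  also have "\<dots> \<le> onorm ((*v) M) * (onorm ((*v) M) ^ n * norm v)"
    using Suc onorm_matrix_vector_nonneg by (intro mult_left_mono)
  finally show ?case by (simp add: mult.assoc)
qed simp

lemma norm_matpow_le:
  "norm (matpow (M::real^'k::finite^'k) n) \<le> real CARD('k) ^ 2 * onorm ((*v) M) ^ n"
proof -
  have "\<bar>matpow M n $ i $ j\<bar> \<le> onorm ((*v) M) ^ n" for i j
  proof -
    have "\<bar>matpow M n $ i $ j\<bar> \<le> norm (matpow M n *v axis j (1::real))"
      by (metis matrix_vector_mult_basis column_def component_le_norm_cart vec_lambda_beta)
    also have "\<dots> \<le> onorm ((*v) M) ^ n" using norm_matpow_matrix_vector_le[of M n "axis j 1"] by simp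
    finally show ?thesis .
  qed
  then have "norm (matpow M n) \<le> (\<Sum>i\<in>(UNIV::'k set). \<Sum>j\<in>(UNIV::'k set). onorm ((*v) M) ^ n)"
    by (intro order_trans[OF norm_matrix_le_sum_abs] sum_mono)
  then show ?thesis by (simp add: power2_eq_square)
qed

lemma mexp_sums: "(\<lambda>k. (1 / fact k) *\<^sub>R matpow M k) sums mexp (M::real^'k::finite^'k)"
proof -
  have "summable (\<lambda>k. real CARD('k) ^ 2 * (inverse (fact k) * onorm ((*v) M) ^ k))"
    by (intro summable_mult summable_exp)
  then have "summable (\<lambda>k. (1 / fact k) *\<^sub>R matpow M k)"
    by (rule summable_comparison_test')
      (use norm_matpow_le[of M] in \<open>auto simp: field_simps intro: mult_left_mono\<close>)
  then show ?thesis unfolding mexp_def by (rule summable_sums)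
qed

lemma mexp_matrix_vector_sums: "(\<lambda>k. (1 / fact k) *\<^sub>R (matpow M k *v v)) sums (mexp M *v v)"
  using bounded_linear.sums[OF bounded_linear_matrix_vector_mult_left[of v] mexp_sums[of M]]
  by (simp add: scaleR_matrix_vector_assoc)

lemma mexp_fixes_kernel:
  assumes "M *v v = 0"
  shows "mexp M *v v = v"
proof -
  have "matpow M k *v v = (if k = 0 then v else 0)" for k
    using assms by (induction k) (auto simp: matrix_vector_mul_assoc[symmetric])
  then have "(\<lambda>k. (1 / fact k) *\<^sub>R (matpow M k *v v)) = (\<lambda>k. if k = 0 then v else 0)"
    by auto
  then have "(\<lambda>k. (1 / fact k) *\<^sub>R (matpow M k *v v)) sums v"
    using sums_single[of 0 "\<lambda>_. v"] by simp
  then show ?thesis using mexp_matrix_vector_sums sums_unique2 by blast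
qed

lemma transpose_matpow: "transpose (matpow M n) = matpow (transpose M) n"
proof -
  have "M ** matpow M n = matpow M n ** M" for n
    by (induction n) (simp_all add: matrix_mul_assoc)
  then show ?thesis by (induction n) (simp_all add: matrix_transpose_mul)
qed

lemma transpose_mexp: "transpose (mexp M) = mexp (transpose (M::real^'k::finite^'k))"
proof -
  have "linear (transpose :: real^'k^'k \<Rightarrow> _)"
    by (rule linearI) (simp_all add: transpose_def vec_eq_iff)
  then have "bounded_linear (transpose :: real^'k^'k \<Rightarrow> _)"
    by (simp add: linear_conv_bounded_linear)
  from bounded_linear.sums[OF this mexp_sums]
  have "(\<lambda>k. (1 / fact k) *\<^sub>R matpow (transpose M) k) sums transpose (mexp M)"
    by (simp add: transpose_scalar transpose_matpow)
  then show ?thesis using mexp_sums sums_unique2 by blast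
qed

lemma transpose_mexp_fixes_kernel:
  assumes "transpose N = N" "N *v w = 0"
  shows "transpose (mexp N) *v w = w"
  using assms by (simp only: transpose_mexp mexp_fixes_kernel)

lemma matpow_scaleR: "matpow (c *\<^sub>R N) n = c ^ n *\<^sub>R matpow N n"
  by (induction n) (simp_all add: matrix_scalar_ac scalar_matrix_assoc[symmetric])

lemma has_vector_derivative_componentwise:
  fixes f :: "real \<Rightarrow> real^'k::finite"
  assumes "\<And>p. ((\<lambda>t. f t $ p) has_real_derivative f' $ p) (at s)"
  shows "(f has_vector_derivative f') (at s)"
  unfolding has_vector_derivative_def
proof (subst has_derivative_componentwise_within, intro ballI)
  fix i :: "real^'k" assume "i \<in> Basis"
  then obtain p where i: "i = axis p 1" using axis_inverse by blast
  have "(\<lambda>h. h * f' $ p) = (*) (f' $ p)" by (auto simp: fun_eq_iff)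
  then have "((\<lambda>t. f t $ p) has_derivative (\<lambda>h. h * f' $ p)) (at s)"
    using assms[of p] by (simp add: has_field_derivative_def)
  then show "((\<lambda>t. f t \<bullet> i) has_derivative (\<lambda>h. (h *\<^sub>R f') \<bullet> i)) (at s)"
    by (simp add: i cart_eq_inner_axis[symmetric])
qed

lemma has_vector_derivative_mexp_scaleR:
  fixes N :: "real^'k::finite^'k"
  shows "((\<lambda>s. mexp (s *\<^sub>R N) *v v) has_vector_derivative (N *v (mexp (s *\<^sub>R N) *v v))) (at s)"
proof (rule has_vector_derivative_componentwise)
  fix p :: 'k
  \<comment> \<open>the \<open>p\<close>-th component of \<open>mexp (s *\<^sub>R N) *v v\<close> is the power series \<open>\<Sum>n. c n * s ^ n\<close>\<close>
  define c where "c n = (matpow N n *v v) $ p / fact n" for n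
  have terms: "(\<lambda>n. (s ^ n / fact n) *\<^sub>R (matpow N n *v v)) sums (mexp (s *\<^sub>R N) *v v)" for s
    using mexp_matrix_vector_sums[of "s *\<^sub>R N" v]
    by (simp add: matpow_scaleR scaleR_matrix_vector_assoc[symmetric] divide_inverse mult.commute)
  have series: "(\<lambda>n. c n * s ^ n) sums ((mexp (s *\<^sub>R N) *v v) $ p)" for s
    using bounded_linear.sums[OF bounded_linear_vec_nth[of p] terms[of s]]
    by (simp add: c_def field_simps)
  have summable: "summable (\<lambda>n. c n * z ^ n)" for z
  proof (rule summable_comparison_test'[OF summable_mult[OF summable_exp[of "onorm ((*v) N) * \<bar>z\<bar>"]]])
    fix n :: nat
    have "norm (c n * z ^ n) = \<bar>(matpow N n *v v) $ p\<bar> / fact n * \<bar>z\<bar> ^ n"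
      by (simp add: c_def abs_mult power_abs)
    also have "\<dots> \<le> (onorm ((*v) N) ^ n * norm v) / fact n * \<bar>z\<bar> ^ n"
      using order_trans[OF component_le_norm_cart norm_matpow_matrix_vector_le]
      by (intro mult_right_mono divide_right_mono) auto
    finally show "norm (c n * z ^ n) \<le> norm v * (inverse (fact n) * (onorm ((*v) N) * \<bar>z\<bar>) ^ n)"
      by (simp add: field_simps)
  qed
  have "diffs c n * s ^ n = (N *v ((s ^ n / fact n) *\<^sub>R (matpow N n *v v))) $ p" for n
  proof -
    have "diffs c n = (N *v (matpow N n *v v)) $ p / fact n"
      by (simp add: diffs_def c_def matrix_vector_mul_assoc del: of_nat_Suc)
    then show ?thesis by (simp add: matrix_vector_mult_scaleR field_simps)
  qed
  moreover have "bounded_linear (\<lambda>u. (N *v u) $ p)"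
    using bounded_linear_compose[OF bounded_linear_vec_nth[of p] matrix_vector_mul_bounded_linear[of N]]
    by (simp add: o_def)
  ultimately have "(\<lambda>n. diffs c n * s ^ n) sums ((N *v (mexp (s *\<^sub>R N) *v v)) $ p)"
    using bounded_linear.sums[OF _ terms[of s]] by simp
  then have "(N *v (mexp (s *\<^sub>R N) *v v)) $ p = (\<Sum>n. diffs c n * s ^ n)"
    by (rule sums_unique)
  moreover have "(\<lambda>s. (mexp (s *\<^sub>R N) *v v) $ p) = (\<lambda>s. \<Sum>n. c n * s ^ n)"
    using series by (simp add: sums_iff)
  ultimately show "((\<lambda>s. (mexp (s *\<^sub>R N) *v v) $ p)
      has_real_derivative (N *v (mexp (s *\<^sub>R N) *v v)) $ p) (at s)"
    using termdiffs_strong_converges_everywhere[OF summable] by simp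
qed

lemma norm_psd_flow_antimono:
  fixes M :: "real^'k::finite^'k" and z :: "real \<Rightarrow> real^'k"
  assumes ab: "a \<le> b" and M: "psd M" and cont: "continuous_on {a..b} z"
    and flow: "\<And>t. a < t \<Longrightarrow> t < b \<Longrightarrow> (z has_vector_derivative - (M *v z t)) (at t)"
  shows "norm (z b) \<le> norm (z a)"
proof -
  define g where "g t = z t \<bullet> z t" for t
  have "g b \<le> g a"
  proof (rule DERIV_nonpos_imp_decreasing_open[OF ab])
    fix t assume t: "a < t" "t < b"
    have z': "(z has_derivative (\<lambda>h. h *\<^sub>R - (M *v z t))) (at t)"
      using flow[OF t] by (simp add: has_vector_derivative_def)
    have "(g has_derivative (\<lambda>h. z t \<bullet> (h *\<^sub>R - (M *v z t)) + (h *\<^sub>R - (M *v z t)) \<bullet> z t)) (at t)"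
      unfolding g_def by (rule has_derivative_inner[OF z' z'])
    moreover have "(\<lambda>h. z t \<bullet> (h *\<^sub>R - (M *v z t)) + (h *\<^sub>R - (M *v z t)) \<bullet> z t)
        = (*) (- 2 * (z t \<bullet> (M *v z t)))"
      by (rule ext) (simp add: inner_commute[of "M *v z t" "z t"] algebra_simps)
    ultimately have "(g has_real_derivative (- 2 * (z t \<bullet> (M *v z t)))) (at t)"
      by (simp add: has_field_derivative_def)
    moreover have "- 2 * (z t \<bullet> (M *v z t)) \<le> 0" using M by (simp add: psd_def)
    ultimately show "\<exists>y. (g has_real_derivative y) (at t) \<and> y \<le> 0" by blast
  next
    show "continuous_on {a..b} g" unfolding g_def using cont by (intro continuous_on_inner)
  qed
  then show ?thesis by (simp add: g_def norm_le)
qed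

lemma psd_flow_eq_mexp:
  fixes M :: "real^'k::finite^'k" and x :: "real \<Rightarrow> real^'k"
  assumes ab: "a \<le> b" and M: "psd M" and cont: "continuous_on {a..b} x"
    and flow: "\<And>t. a < t \<Longrightarrow> t < b \<Longrightarrow> (x has_vector_derivative - (M *v x t)) (at t)"
  shows "x b = mexp (- ((b - a) *\<^sub>R M)) *v x a"
proof -
  define Y where "Y s = mexp (s *\<^sub>R (- M)) *v x a" for s
  define y where "y t = Y (t - a)" for t
  have y_flow: "(y has_vector_derivative - (M *v y t)) (at t)" for t
  proof -
    have "((\<lambda>t. t - a) has_vector_derivative 1) (at t)"
      using has_vector_derivative_diff[OF has_vector_derivative_id has_vector_derivative_const] by simp
    then have "((Y \<circ> (\<lambda>t. t - a)) has_vector_derivative 1 *\<^sub>R ((- M) *v Y (t - a))) (at t)"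
      by (rule vector_diff_chain_at) (unfold Y_def, rule has_vector_derivative_mexp_scaleR)
    then show ?thesis by (simp add: y_def[abs_def] o_def uminus_matrix_vector_mult)
  qed
  \<comment> \<open>the difference of two solutions is a solution starting at \<open>0\<close>, and its norm cannot grow\<close>
  define z where "z t = x t - y t" for t
  have y_cont: "continuous_on {a..b} y"
    by (intro continuous_at_imp_continuous_on ballI has_vector_derivative_continuous[OF y_flow])
  have z_cont: "continuous_on {a..b} z" unfolding z_def by (intro continuous_on_diff cont y_cont)
  have z_flow: "(z has_vector_derivative - (M *v z t)) (at t)" if "a < t" "t < b" for t
  proof -
    have "(z has_vector_derivative (- (M *v x t) - - (M *v y t))) (at t)"
      unfolding z_def by (rule has_vector_derivative_diff[OF flow[OF that] y_flow])
    then show ?thesis by (simp add: z_def matrix_vector_mult_diff_distrib)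
  qed
  have "y a = x a" by (simp add: y_def Y_def mexp_fixes_kernel)
  then have "z a = 0" by (simp add: z_def)
  moreover have "norm (z b) \<le> norm (z a)" by (rule norm_psd_flow_antimono[OF ab M z_cont z_flow])
  ultimately have "z b = 0" by simp
  then have "x b = Y (b - a)" by (simp add: z_def y_def)
  then show ?thesis by (simp only: Y_def scaleR_minus_right)
qed

lemma Phi_fixes_common_kernel:
  assumes "\<And>k. Lk k *v w = 0"
  shows "Phi Lk tk k'' k' *v w = w"
proof -
  have "trans_mat Lk tk k' j *v w = w" for j
    by (induction j) (simp_all add: assms matrix_vector_mul_assoc[symmetric] mexp_fixes_kernel
        uminus_matrix_vector_mult scaleR_matrix_vector_assoc[symmetric])
  then show ?thesis by (simp add: Phi_def)
qed

lemma transpose_Phi_fixes_common_kernel: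
  assumes kernel: "\<And>k. Lk k *v w = 0" and sym: "\<And>k. transpose (Lk k) = Lk k"
  shows "transpose (Phi Lk tk k'' k') *v w = w"
proof -
  have "transpose (trans_mat Lk tk k' j) *v w = w" for j
  proof (induction j)
    case (Suc j)
    let ?N = "- ((tk (k' + j + 1) - tk (k' + j)) *\<^sub>R Lk (k' + j))"
    have "transpose (mexp ?N) *v w = w"
      by (rule transpose_mexp_fixes_kernel)
        (use kernel sym in \<open>simp_all add: transpose_uminus transpose_scalar
          uminus_matrix_vector_mult scaleR_matrix_vector_assoc[symmetric]\<close>)
    then show ?case
      using Suc by (simp only: trans_mat.simps matrix_transpose_mul matrix_vector_mul_assoc[symmetric])
  qed simp
  then show ?thesis by (simp add: Phi_def)
qed

section \<open>Characteristic polynomial and ordered eigenvalues\<close>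

definition const_poly_mat :: "real^'k::finite^'j::finite \<Rightarrow> real poly^'k^'j" where
  "const_poly_mat M = (\<chi> i j. [:M$i$j:])"

lemma const_poly_mat_mult: "const_poly_mat (A ** B) = const_poly_mat A ** const_poly_mat B"
  by (simp add: const_poly_mat_def vec_eq_iff matrix_matrix_mult_def sum_to_poly mult_to_poly ac_simps)

lemma const_poly_mat_one: "const_poly_mat (mat 1 :: real^'k::finite^'k) = mat 1"
  by (simp add: const_poly_mat_def vec_eq_iff mat_def one_pCons)

lemma charpoly_eq_det: "charpoly G = det (mat [:0, 1:] - const_poly_mat G)"
  unfolding charpoly_def const_poly_mat_def mat_def by (rule arg_cong[where f = det]) (simp add: vec_eq_iff)

lemma poly_charpoly: "poly (charpoly G) x = det (mat x - G)"
proof -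
  have "poly (det (mat [:0, 1:] - const_poly_mat G)) x
      = det (\<chi> i j. poly ((mat [:0, 1:] - const_poly_mat G) $ i $ j) x)"
    by (simp add: det_def poly_sum poly_prod)
  also have "(\<chi> i j. poly ((mat [:0, 1:] - const_poly_mat G) $ i $ j) x) = mat x - G"
    by (simp add: vec_eq_iff mat_def const_poly_mat_def)
  finally show ?thesis by (simp add: charpoly_eq_det)
qed

lemma charpoly_similar:
  fixes G R Q :: "real^'k::finite^'k"
  assumes RQ: "R ** Q = mat 1"
  shows "charpoly (R ** G ** Q) = charpoly G"
proof -
  let ?X = "mat [:0, 1:] :: real poly^'k^'k" and ?C = const_poly_mat
  have "?C R ** (?X - ?C G) ** ?C Q = ?X ** (?C R ** ?C Q) - ?C (R ** G ** Q)"
    by (simp add: matrix_mul_diff_distrib_left matrix_mul_diff_distrib_right const_poly_mat_mult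
        matrix_mul_assoc mat_matrix_mul_commute)
  also have "\<dots> = ?X - ?C (R ** G ** Q)"
    by (simp add: const_poly_mat_mult[symmetric] RQ const_poly_mat_one)
  finally have similar: "?C R ** (?X - ?C G) ** ?C Q = ?X - ?C (R ** G ** Q)" .
  have "det (?C R) * det (?C Q) = 1"
    using det_mul[of "?C R" "?C Q"] by (simp add: const_poly_mat_mult[symmetric] RQ const_poly_mat_one)
  then have "det (?X - ?C (R ** G ** Q)) = det (?X - ?C G)"
    by (simp add: similar[symmetric] det_mul algebra_simps)
  then show ?thesis by (simp add: charpoly_eq_det)
qed

lemma charpoly_dvd_of_axis_eigenvectors:
  fixes H :: "real^'k::finite^'k"
  assumes eig: "\<And>j. j \<in> J \<Longrightarrow> H *v axis j 1 = lam j *\<^sub>R axis j 1"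
  shows "(\<Prod>j\<in>J. [:- lam j, 1:]) dvd charpoly H"
proof -
  let ?Z = "mat [:0, 1:] - const_poly_mat H"
  define c where "c i = (if i \<in> J then [:- lam i, 1:] else 1)" for i
  define a where "a i = (if i \<in> J then axis i 1 else transpose ?Z $ i)" for i
  have H_col: "H$k$i = (if k = i then lam i else 0)" if "i \<in> J" for i k
  proof -
    have "H$k$i = (lam i *\<^sub>R axis i 1) $ k" using eig[OF that] matrix_vector_mult_axis_nth[of H i k] by metis
    then show ?thesis by (simp add: axis_def)
  qed
  \<comment> \<open>the rows of \<open>transpose ?Z\<close> belonging to \<open>J\<close> are multiples of unit vectors\<close>
  have "transpose ?Z = (\<chi> i. c i *s a i)"
    by (auto simp: vec_eq_iff transpose_def const_poly_mat_def mat_def c_def a_def axis_def H_col)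
  then have "charpoly H = prod c UNIV * det (\<chi> i. a i)"
    by (simp add: charpoly_eq_det det_transpose[of ?Z, symmetric] det_rows_mul)
  also have "prod c UNIV = (\<Prod>j\<in>J. [:- lam j, 1:])"
    using prod.inter_restrict[of UNIV "\<lambda>j. [:- lam j, 1:]" J] by (simp add: c_def)
  finally show ?thesis by (metis dvd_triv_left)
qed

lemma charpoly_nonzero: "charpoly (G::real^'k::finite^'k) \<noteq> 0"
proof -
  define K where "K = onorm ((*v) G) + 1"
  have "v = 0" if "(mat K - G) *v v = 0" for v
  proof -
    have "G *v v = K *\<^sub>R v"
      using that by (simp add: matrix_vector_mult_diff_rdistrib mat_matrix_vector_mult)
    then have "K * norm v \<le> (K - 1) * norm v"
      using norm_matrix_vector_mult_le[of G v] onorm_matrix_vector_nonneg[of G] by (simp add: K_def)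
    then show "v = 0" by (simp add: algebra_simps)
  qed
  then have "inj ((*v) (mat K - G))"
    by (intro linear_inj_on_iff_eq_0[THEN iffD2] matrix_vector_mul_linear) auto
  then have "det (mat K - G) \<noteq> 0"
    using det_nz_iff_inj[OF matrix_vector_mul_linear[of "mat K - G"]]
    unfolding matrix_of_matrix_vector_mul by blast
  then show ?thesis by (metis poly_0 poly_charpoly)
qed

lemma independent_extends_to_invertible_matrix:
  fixes U :: "(real^'k::finite) set"
  assumes "independent U"
  obtains Q R :: "real^'k^'k" where "R ** Q = mat 1" "U \<subseteq> range (\<lambda>j. Q *v axis j 1)"
proof -
  obtain B where B: "U \<subseteq> B" "independent B" "UNIV \<subseteq> span B"
    by (rule maximal_independent_subset_extend[OF subset_UNIV assms]) blast
  have "finite B" using independent_bound[OF B(2)] by blast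
  moreover have "card B = CARD('k)"
    using basis_card_eq_dim[of B UNIV] B by simp
  ultimately obtain \<beta> where \<beta>: "bij_betw \<beta> (UNIV::'k set) B"
    using finite_same_card_bij[of "UNIV::'k set" B] by auto
  define Q :: "real^'k^'k" where "Q = (\<chi> i j. \<beta> j $ i)"
  have Q_axis: "Q *v axis j 1 = \<beta> j" for j
    by (simp add: vec_eq_iff matrix_vector_mult_axis_nth Q_def)
  then have B_Q: "B \<subseteq> range (\<lambda>j. Q *v axis j 1)"
    using \<beta> by (auto simp: bij_betw_def)
  then have "span B \<subseteq> range ((*v) Q)"
    by (intro span_minimal subspace_range_matrix_vector_mult) auto
  then have "surj ((*v) Q)" using B(3) by blast
  then obtain R where "Q ** R = mat 1" using matrix_right_invertible_surjective by blast
  then have "R ** Q = mat 1" by (rule matrix_left_right_inverse1)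
  with B(1) B_Q show ?thesis by (intro that) auto
qed

lemma size_filter_mset_sum_singletons:
  assumes "finite J" "\<And>j. j \<in> J \<Longrightarrow> P (f j)"
  shows "size (filter_mset P (\<Sum>j\<in>J. {#f j#})) = card J"
  using assms by (induction J rule: finite_induct) auto

lemma card_le_roots_above:
  fixes G :: "real^'k::finite^'k" and U :: "(real^'k) set"
  assumes ind: "independent U" and eig: "\<And>u. u \<in> U \<Longrightarrow> G *v u = lam u *\<^sub>R u"
    and above: "\<And>u. u \<in> U \<Longrightarrow> q < lam u"
  shows "card U \<le> size (filter_mset (\<lambda>r. q < r) (proots (charpoly G)))"
proof -
  obtain Q R :: "real^'k^'k" where RQ: "R ** Q = mat 1" and U: "U \<subseteq> range (\<lambda>j. Q *v axis j 1)"
    by (rule independent_extends_to_invertible_matrix[OF ind])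
  define \<beta> where "\<beta> j = Q *v axis j 1" for j
  define J where "J = \<beta> -` U"
  have "inj \<beta>"
  proof (rule injI)
    fix i j assume "\<beta> i = \<beta> j"
    then have "(R ** Q) *v axis i 1 = (R ** Q) *v axis j (1::real)"
      by (simp add: \<beta>_def matrix_vector_mul_assoc[symmetric])
    then show "i = j" by (simp add: RQ axis_eq_axis)
  qed
  then have "bij_betw \<beta> J U" using U by (auto simp: bij_betw_def J_def \<beta>_def inj_on_def)
  then have card_J: "card J = card U" by (rule bij_betw_same_card)
  \<comment> \<open>in the basis given by the columns of \<open>Q\<close>, the eigenvectors in \<open>U\<close> become unit vectors\<close>
  have "(R ** G ** Q) *v axis j 1 = lam (\<beta> j) *\<^sub>R axis j 1" if "j \<in> J" for j
  proof -
    have "(R ** G ** Q) *v axis j 1 = R *v (G *v \<beta> j)"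
      by (simp add: \<beta>_def matrix_vector_mul_assoc matrix_mul_assoc)
    also have "\<dots> = lam (\<beta> j) *\<^sub>R ((R ** Q) *v axis j 1)"
      using eig[of "\<beta> j"] that by (simp add: J_def \<beta>_def matrix_vector_mult_scaleR matrix_vector_mul_assoc)
    finally show ?thesis by (simp add: RQ)
  qed
  then have "(\<Prod>j\<in>J. [:- lam (\<beta> j), 1:]) dvd charpoly (R ** G ** Q)"
    by (rule charpoly_dvd_of_axis_eigenvectors)
  then have "(\<Prod>j\<in>J. [:- lam (\<beta> j), 1:]) dvd charpoly G" by (simp only: charpoly_similar[OF RQ])
  then obtain r where r: "charpoly G = (\<Prod>j\<in>J. [:- lam (\<beta> j), 1:]) * r" by (auto simp: dvd_def)
  moreover have "charpoly G \<noteq> 0" by (rule charpoly_nonzero)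
  ultimately have "proots (charpoly G) = proots (\<Prod>j\<in>J. [:- lam (\<beta> j), 1:]) + proots r"
    by (simp add: proots_mult)
  also have "proots (\<Prod>j\<in>J. [:- lam (\<beta> j), 1:]) = (\<Sum>j\<in>J. {# lam (\<beta> j) #})"
    by (subst proots_prod) auto
  finally have "size (filter_mset (\<lambda>r. q < r) (\<Sum>j\<in>J. {# lam (\<beta> j) #}))
      \<le> size (filter_mset (\<lambda>r. q < r) (proots (charpoly G)))"
    by simp
  moreover have "size (filter_mset (\<lambda>r. q < r) (\<Sum>j\<in>J. {# lam (\<beta> j) #})) = card J"
    using above by (intro size_filter_mset_sum_singletons) (auto simp: J_def)
  ultimately show ?thesis by (simp add: card_J)
qed

lemma less_mu_if_roots_above:
  fixes G :: "real^'k::finite^'k"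
  assumes "m + 1 \<le> size (filter_mset (\<lambda>r. q < r) (proots (charpoly G)))"
  shows "q < mu (m + 1) G"
proof (rule ccontr)
  assume not_less: "\<not> q < mu (m + 1) G"
  define ys where "ys = sorted_list_of_multiset (proots (charpoly G))"
  define xs where "xs = rev ys"
  \<comment> \<open>\<open>xs\<close> is non-increasing, so everything from position \<open>m\<close> on is at most \<open>mu (m + 1) G \<le> q\<close>\<close>
  have small: "\<not> q < x" if x: "x \<in> set (drop m xs)" for x
  proof -
    obtain i where "i < length (drop m xs)" "drop m xs ! i = x"
      using x unfolding in_set_conv_nth by blast
    then have i: "m + i < length xs" "x = xs ! (m + i)" by auto
    have "x = ys ! (length ys - Suc (m + i))" using i by (simp add: xs_def rev_nth)
    also have "\<dots> \<le> ys ! (length ys - Suc m)"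
      using i by (intro sorted_nth_mono) (auto simp: xs_def ys_def)
    also have "\<dots> = mu (m + 1) G" using i by (simp add: mu_def eigs_desc_def xs_def ys_def rev_nth)
    finally show ?thesis using not_less by simp
  qed
  have "mset xs = proots (charpoly G)" by (simp add: xs_def ys_def)
  then have "size (filter_mset (\<lambda>r. q < r) (proots (charpoly G))) = length (filter (\<lambda>r. q < r) xs)"
    by (metis mset_filter size_mset)
  also have "\<dots> = length (filter (\<lambda>r. q < r) (take m xs) @ filter (\<lambda>r. q < r) (drop m xs))"
    by (metis append_take_drop_id filter_append)
  also have "filter (\<lambda>r. q < r) (drop m xs) = []" using small by (simp add: filter_empty_conv)
  also have "length (filter (\<lambda>r. q < r) (take m xs) @ []) \<le> length (take m xs)"
    by (simp only: append_Nil2 length_filter_le)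
  also have "\<dots> \<le> m" by simp
  finally show False using assms by simp
qed

lemma norm_le_on_orthogonal_complement_of_fixed:
  fixes P :: "real^'k::finite^'k" and w :: "'m::finite \<Rightarrow> real^'k"
  assumes orth: "\<And>c c'. c \<noteq> c' \<Longrightarrow> w c \<bullet> w c' = 0" and nz: "\<And>c. w c \<noteq> 0"
    and fixed: "\<And>c. P *v w c = w c" and fixed_transpose: "\<And>c. transpose P *v w c = w c"
    and mu: "mu (CARD('m) + 1) (transpose P ** P) \<le> q" and q: "q < 1"
    and y: "\<And>c. w c \<bullet> y = 0"
  shows "(norm (P *v y))\<^sup>2 \<le> q * (norm y)\<^sup>2"
proof (rule ccontr)
  assume too_long: "\<not> (norm (P *v y))\<^sup>2 \<le> q * (norm y)\<^sup>2"
  define G where "G = transpose P ** P"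
  define S where "S = {y. \<forall>c. w c \<bullet> y = 0}"
  have G_sym: "transpose G = G" by (simp add: G_def matrix_transpose_mul)
  have G_quadratic: "u \<bullet> (G *v u) = (norm (P *v u))\<^sup>2" for u
  proof -
    have "u \<bullet> (G *v u) = u \<bullet> (transpose P *v (P *v u))" by (simp only: G_def matrix_vector_mul_assoc)
    also have "\<dots> = (P *v u) \<bullet> (P *v u)" by (rule inner_transpose_matrix_vector)
    finally show ?thesis by (simp add: dot_square_norm)
  qed
  have G_w: "G *v w c = w c" for c
    by (simp only: G_def matrix_vector_mul_assoc[symmetric] fixed fixed_transpose)
  have S: "subspace S" by (auto simp: subspace_def S_def inner_add_right)
  have S_invariant: "G *v u \<in> S" if "u \<in> S" for u
    using that inner_symmetric_matrix_vector[OF G_sym, of "w _" u] by (simp add: S_def G_w inner_commute)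
  have y_S: "y \<in> S" using y by (simp add: S_def)
  have "q * (y \<bullet> y) < y \<bullet> (G *v y)" using too_long by (simp add: G_quadratic dot_square_norm)
  then obtain e lam where e: "e \<in> S" "e \<noteq> 0" "G *v e = lam *\<^sub>R e" "q < lam"
    using eigenvector_above_in_invariant_subspace[OF G_sym S S_invariant y_S] by blast
  \<comment> \<open>together with the fixed vectors \<open>w c\<close> (eigenvalue \<open>1 > q\<close>), \<open>e\<close> yields \<open>CARD('m) + 1\<close>
    orthogonal eigenvectors with eigenvalues above \<open>q\<close>\<close>
  define U where "U = insert e (range w)"
  have "inj w"
  proof (rule injI)
    fix c c' assume "w c = w c'"
    then show "c = c'" using orth[of c c'] nz[of c] by auto
  qed
  moreover have "e \<notin> range w"
  proof
    assume "e \<in> range w"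
    then obtain c where c: "e = w c" by blast
    have "w c \<bullet> e = 0" using e(1) by (simp add: S_def)
    then have "e \<bullet> e = 0" by (simp add: c)
    then show False using e(2) by simp
  qed
  ultimately have "card U = CARD('m) + 1" by (simp add: U_def card_image)
  moreover have "independent U"
  proof (rule pairwise_orthogonal_independent)
    show "pairwise orthogonal U"
      using e(1) by (auto simp: pairwise_def U_def orthogonal_def S_def inner_commute) (metis orth)
    show "0 \<notin> U" using e(2) nz by (auto simp: U_def)
  qed
  then have "card U \<le> size (filter_mset (\<lambda>r. q < r) (proots (charpoly G)))"
    by (rule card_le_roots_above[where lam = "\<lambda>u. if u = e then lam else 1"])
      (use e(3,4) q \<open>e \<notin> range w\<close> in \<open>auto simp: U_def G_w\<close>)
  ultimately have "q < mu (CARD('m) + 1) G" by (intro less_mu_if_roots_above) simp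
  then show False using mu by (simp add: G_def)
qed

section \<open>Switched Laplacian flows\<close>

lemma has_integral_const_on_interval:
  fixes f :: "real \<Rightarrow> 'a::banach"
  assumes "a \<le> b" and "\<And>t. a \<le> t \<Longrightarrow> t < b \<Longrightarrow> f t = F"
  shows "(f has_integral ((b - a) *\<^sub>R F)) {a..b}"
proof (rule has_integral_spike_finite[of "{b}"])
  show "((\<lambda>_. F) has_integral ((b - a) *\<^sub>R F)) {a..b}"
    using has_integral_const_real[of F a b] assms(1) by simp
qed (use assms(2) in auto)

lemma unbounded_sequence_interval:
  fixes f :: "nat \<Rightarrow> 'a::{linorder,no_top}"
  assumes "filterlim f at_top sequentially" and "f 0 \<le> t"
  obtains k where "f k \<le> t" "t < f (Suc k)"
proof -
  obtain t' where "t < t'" using gt_ex by blast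
  moreover obtain N where "\<And>n. N \<le> n \<Longrightarrow> t' \<le> f n"
    using assms(1) by (auto simp: filterlim_at_top eventually_sequentially)
  ultimately have "{k. f k \<le> t} \<subseteq> {..<N}" by (force simp: not_less[symmetric])
  then have finite: "finite {k. f k \<le> t}" by (rule finite_subset) simp
  define k where "k = Max {k. f k \<le> t}"
  have "f k \<le> t" using Max_in[OF finite] assms(2) by (auto simp: k_def)
  moreover have "t < f (Suc k)"
  proof (rule ccontr)
    assume "\<not> t < f (Suc k)"
    then have "Suc k \<le> k" unfolding k_def using finite by (simp add: not_less)
    then show False by simp
  qed
  ultimately show ?thesis by (rule that)
qed

locale switching_times =
  fixes tk :: "nat \<Rightarrow> real"
  assumes tk_0: "tk 0 = 0"
    and tk_less_Suc: "\<And>k. tk k < tk (Suc k)"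
    and tk_unbounded: "filterlim tk at_top sequentially"
begin

lemma tk_mono: "i \<le> j \<Longrightarrow> tk i \<le> tk j"
  by (rule lift_Suc_mono_le[of tk, OF less_imp_le[OF tk_less_Suc]])

lemma tk_nonneg: "0 \<le> tk k"
  using tk_mono[of 0 k] tk_0 by simp

lemma switching_interval:
  assumes "0 \<le> t"
  obtains k where "tk k \<le> t" "t < tk (Suc k)"
  by (rule unbounded_sequence_interval[OF tk_unbounded]) (use assms tk_0 in simp_all)

lemma not_switching_time:
  assumes "tk k < t" "t < tk (Suc k)"
  shows "t \<notin> range tk"
proof
  assume "t \<in> range tk"
  then obtain j where j: "t = tk j" by blast
  show False
  proof (cases "j \<le> k")
    case True then show ?thesis using tk_mono[of j k] assms j by simp
  next
    case False then show ?thesis using tk_mono[of "Suc k" j] assms j by simp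
  qed
qed

end

locale switched_laplacians = switching_times tk for tk :: "nat \<Rightarrow> real" +
  fixes Lk :: "nat \<Rightarrow> real^'k::finite^'k" and L :: "real \<Rightarrow> real^'k^'k"
  assumes L_eq_Lk: "\<And>k t. tk k \<le> t \<Longrightarrow> t < tk (Suc k) \<Longrightarrow> L t = Lk k"
    and Lk_symmetric: "\<And>k. transpose (Lk k) = Lk k"
    and Lk_psd: "\<And>k. psd (Lk k)"
begin

lemma L_psd: "0 \<le> t \<Longrightarrow> psd (L t)"
  by (metis switching_interval L_eq_Lk Lk_psd)

lemma L_integrable: "i \<le> j \<Longrightarrow> L integrable_on {tk i..tk j}"
proof (induction j rule: dec_induct)
  case (step j)
  have "(L has_integral ((tk (Suc j) - tk j) *\<^sub>R Lk j)) {tk j..tk (Suc j)}"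
    using L_eq_Lk tk_less_Suc[of j] by (intro has_integral_const_on_interval) auto
  then show ?case
    using Henstock_Kurzweil_Integration.integrable_combine[OF tk_mono[OF step(1)]
        less_imp_le[OF tk_less_Suc] step(3)]
    by blast
qed (use integrable_on_refl[of L "tk i"] in simp)

lemma kernel_Lk_of_kernel_avg_lap:
  assumes "i \<le> k" "k < j" and avg: "avg_lap L (tk i) (tk j) *v u = 0"
  shows "Lk k *v u = 0"
proof -
  define g where "g = (\<lambda>t. u \<bullet> (L t *v u))"
  have bl: "bounded_linear (\<lambda>M. u \<bullet> (M *v u))"
    using bounded_linear_compose[OF bounded_linear_inner_right[of u]
        bounded_linear_matrix_vector_mult_left[of u]]
    by (simp add: o_def)
  have int_L: "L integrable_on {tk i..tk j}" using assms by (intro L_integrable) simp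
  have "tk i < tk j" using assms lift_Suc_mono_less[of tk, OF tk_less_Suc, of i j] by simp
  then have "integral {tk i..tk j} L *v u = 0"
    using avg by (simp add: avg_lap_def scaleR_matrix_vector_assoc[symmetric])
  then have g_int: "integral {tk i..tk j} g = 0"
    using integral_linear[OF int_L bl] by (simp add: g_def o_def)
  have on_interval: "(g has_integral ((tk (Suc k) - tk k) * (u \<bullet> (Lk k *v u)))) {tk k..tk (Suc k)}"
    using has_integral_const_on_interval[of "tk k" "tk (Suc k)" g] tk_less_Suc[of k] L_eq_Lk
    by (simp add: g_def)
  \<comment> \<open>\<open>g \<ge> 0\<close>, so its vanishing integral bounds its integral over any single interval\<close>
  have "integral {tk k..tk (Suc k)} g \<le> integral {tk i..tk j} g"
  proof (rule integral_subset_le)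
    show "{tk k..tk (Suc k)} \<subseteq> {tk i..tk j}" using assms tk_mono[of i k] tk_mono[of "Suc k" j] by auto
    show "g integrable_on {tk k..tk (Suc k)}" using on_interval by blast
    show "g integrable_on {tk i..tk j}"
      unfolding g_def using integrable_linear[OF int_L bl] by (simp add: o_def)
    show "\<forall>t\<in>{tk i..tk j}. 0 \<le> g t" using L_psd tk_nonneg[of i] by (auto simp: g_def psd_def)
  qed
  then have "(tk (Suc k) - tk k) * (u \<bullet> (Lk k *v u)) \<le> 0"
    using g_int integral_unique[OF on_interval] by simp
  then have "u \<bullet> (Lk k *v u) = 0"
    using tk_less_Suc[of k] Lk_psd[of k] by (simp add: psd_def mult_le_0_iff order.antisym)
  then show ?thesis by (rule psd_kernel_of_quadratic_form_zero[OF Lk_symmetric Lk_psd])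
qed

lemma kernel_Lk_of_kernel_avg_laps:
  assumes "strict_mono kl" "kl 0 = 0" and avg: "\<And>l. avg_lap L (tk (kl l)) (tk (kl (Suc l))) *v u = 0"
  shows "Lk k *v u = 0"
proof -
  obtain l where "kl l \<le> k" "k < kl (Suc l)"
    by (rule unbounded_sequence_interval[OF filterlim_subseq[OF assms(1)]]) (simp add: assms(2))
  then show ?thesis using avg[of l] by (rule kernel_Lk_of_kernel_avg_lap)
qed

end

locale switched_flow = switched_laplacians tk Lk L
  for tk :: "nat \<Rightarrow> real" and Lk :: "nat \<Rightarrow> real^'k::finite^'k" and L +
  fixes x :: "real \<Rightarrow> real^'k"
  assumes x_continuous: "continuous_on {0..} x"
    and x_flow: "\<And>t. 0 < t \<Longrightarrow> t \<notin> range tk \<Longrightarrow> (x has_vector_derivative - (L t *v x t)) (at t)"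
begin

lemma flow_on_interval:
  assumes "tk k < t" "t < tk (Suc k)"
  shows "(x has_vector_derivative - (Lk k *v x t)) (at t)"
  using x_flow[OF _ not_switching_time[OF assms]] assms tk_nonneg[of k] L_eq_Lk[of k t] by simp

lemma continuous_on_interval: "continuous_on {tk k..b} x"
  by (rule continuous_on_subset[OF x_continuous]) (use tk_nonneg in auto)

lemma eq_mexp_on_interval:
  assumes "tk k \<le> t" "t \<le> tk (Suc k)"
  shows "x t = mexp (- ((t - tk k) *\<^sub>R Lk k)) *v x (tk k)"
  by (rule psd_flow_eq_mexp[OF assms(1) Lk_psd continuous_on_interval]) (use assms flow_on_interval in auto)

lemma eq_Phi_at_switching_times:
  assumes "k' \<le> k''"
  shows "x (tk k'') = Phi Lk tk k'' k' *v x (tk k')"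
proof -
  have "x (tk (k' + j)) = trans_mat Lk tk k' j *v x (tk k')" for j
  proof (induction j)
    case (Suc j)
    then show ?case
      using eq_mexp_on_interval[of "k' + j" "tk (Suc (k' + j))"] tk_less_Suc[of "k' + j"]
      by (simp add: matrix_vector_mul_assoc)
  qed simp
  moreover obtain j where "k'' = k' + j" using le_Suc_ex[OF assms] by blast
  ultimately show ?thesis by (simp add: Phi_def)
qed

lemma norm_le_at_switching_time:
  assumes "tk k \<le> t"
  shows "norm (x t) \<le> norm (x (tk k))"
proof -
  have "norm (x (tk (Suc i))) \<le> norm (x (tk i))" for i
    by (rule norm_psd_flow_antimono[OF less_imp_le[OF tk_less_Suc] Lk_psd[of i] continuous_on_interval])
      (use flow_on_interval in auto)
  then have decreasing: "norm (x (tk i)) \<le> norm (x (tk k))" if "k \<le> i" for i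
    using lift_Suc_antimono_le[of "\<lambda>i. norm (x (tk i))"] that by blast
  have "0 \<le> t" using assms tk_nonneg[of k] by linarith
  then obtain i where i: "tk i \<le> t" "t < tk (Suc i)" by (rule switching_interval)
  have "k \<le> i"
  proof (rule ccontr)
    assume "\<not> k \<le> i"
    then show False using assms i tk_mono[of "Suc i" k] by simp
  qed
  have "norm (x t) \<le> norm (x (tk i))"
    by (rule norm_psd_flow_antimono[OF i(1) Lk_psd[of i] continuous_on_interval])
      (use i flow_on_interval in auto)
  also have "\<dots> \<le> norm (x (tk k))" by (rule decreasing[OF \<open>k \<le> i\<close>])
  finally show ?thesis .
qed

lemma inner_common_kernel_const:
  assumes kernel: "\<And>k. Lk k *v w = 0" and "0 \<le> t"
  shows "w \<bullet> x t = w \<bullet> x 0"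
proof -
  have mexp_preserves: "w \<bullet> (mexp (- (c *\<^sub>R Lk k)) *v v) = w \<bullet> v" for c k v
  proof -
    have "transpose (mexp (- (c *\<^sub>R Lk k))) *v w = w"
      by (rule transpose_mexp_fixes_kernel)
        (use kernel Lk_symmetric in \<open>simp_all add: transpose_uminus transpose_scalar
          uminus_matrix_vector_mult scaleR_matrix_vector_assoc[symmetric]\<close>)
    then show ?thesis using inner_transpose_matrix_vector[of v "mexp (- (c *\<^sub>R Lk k))" w]
      by (simp add: inner_commute)
  qed
  have at_switching_time: "w \<bullet> x (tk k) = w \<bullet> x 0" for k
  proof (induction k)
    case (Suc k)
    then show ?case
      using eq_mexp_on_interval[of k "tk (Suc k)"] tk_less_Suc[of k] mexp_preserves by simp
  qed (simp add: tk_0)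
  obtain k where "tk k \<le> t" "t < tk (Suc k)" using switching_interval assms(2) by blast
  then show ?thesis using eq_mexp_on_interval[of k t] mexp_preserves at_switching_time by simp
qed

lemma shift_by_common_kernel:
  assumes kernel: "\<And>k. Lk k *v v = 0"
  shows "switched_flow tk Lk L (\<lambda>t. x t - v)"
proof (intro switched_flow.intro switched_flow_axioms.intro)
  show "switched_laplacians tk Lk L" by (rule switched_laplacians_axioms)
  show "continuous_on {0..} (\<lambda>t. x t - v)" by (intro continuous_on_diff x_continuous continuous_on_const)
  fix t assume t: "0 < t" "t \<notin> range tk"
  have "0 \<le> t" using t(1) by simp
  then obtain k where "tk k \<le> t" "t < tk (Suc k)" by (rule switching_interval)
  then have "L t *v v = 0" using L_eq_Lk kernel by simp
  then show "((\<lambda>t. x t - v) has_vector_derivative - (L t *v (x t - v))) (at t)"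
    using has_vector_derivative_diff[OF x_flow[OF t] has_vector_derivative_const]
    by (simp add: matrix_vector_mult_diff_distrib)
qed

lemma tendsto_zero_if_contracting:
  assumes kl: "strict_mono kl" "kl 0 = 0" and q: "0 \<le> q" "q < 1"
    and contracting: "\<And>l. (norm (x (tk (kl (Suc l)))))\<^sup>2 \<le> q * (norm (x (tk (kl l))))\<^sup>2"
  shows "(x \<longlongrightarrow> 0) at_top"
proof (rule tendstoI)
  fix \<epsilon> :: real assume "\<epsilon> > 0"
  have geometric: "(norm (x (tk (kl l))))\<^sup>2 \<le> q ^ l * (norm (x 0))\<^sup>2" for l
  proof (induction l)
    case (Suc l)
    have "(norm (x (tk (kl (Suc l)))))\<^sup>2 \<le> q * (norm (x (tk (kl l))))\<^sup>2" by (rule contracting)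
    also have "\<dots> \<le> q * (q ^ l * (norm (x 0))\<^sup>2)" using Suc q(1) by (rule mult_left_mono)
    finally show ?case by (simp add: mult.assoc)
  qed (simp add: kl(2) tk_0)
  have "(\<lambda>l. q ^ l * (norm (x 0))\<^sup>2) \<longlonglongrightarrow> 0 * (norm (x 0))\<^sup>2"
    using q by (intro tendsto_mult LIMSEQ_power_zero tendsto_const) auto
  then have "\<forall>\<^sub>F l in sequentially. q ^ l * (norm (x 0))\<^sup>2 < \<epsilon>\<^sup>2"
    using \<open>\<epsilon> > 0\<close> by (intro order_tendstoD(2)) auto
  then obtain l where l: "q ^ l * (norm (x 0))\<^sup>2 < \<epsilon>\<^sup>2" by (auto simp: eventually_sequentially)
  have "dist (x t) 0 < \<epsilon>" if "tk (kl l) \<le> t" for t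
  proof -
    have "(norm (x t))\<^sup>2 \<le> (norm (x (tk (kl l))))\<^sup>2"
      using norm_le_at_switching_time[OF that] norm_ge_zero by (rule power_mono)
    also have "\<dots> < \<epsilon>\<^sup>2" using geometric[of l] l by linarith
    finally have "norm (x t) < \<epsilon>" using \<open>\<epsilon> > 0\<close> by (rule power2_less_imp_less[OF _ less_imp_le])
    then show ?thesis by simp
  qed
  then show "\<forall>\<^sub>F t in at_top. dist (x t) 0 < \<epsilon>"
    unfolding eventually_at_top_linorder by blast
qed

theorem tendsto_orthogonal_projection:
  fixes B :: "real^'m::finite^'k" and kl :: "nat \<Rightarrow> nat"
  assumes gram: "transpose B ** B = c *\<^sub>R mat 1" and c: "c \<noteq> 0"
    and kernel: "\<And>k y. Lk k *v (B *v y) = 0"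
    and kl: "strict_mono kl" "kl 0 = 0" and q: "0 \<le> q" "q < 1"
    and mu: "\<And>l. mu (CARD('m) + 1)
      (transpose (Phi Lk tk (kl (Suc l)) (kl l)) ** Phi Lk tk (kl (Suc l)) (kl l)) \<le> q"
  shows "(x \<longlongrightarrow> (1 / c) *\<^sub>R (B *v (transpose B *v x 0))) at_top"
proof -
  define xstar where "xstar = (1 / c) *\<^sub>R (B *v (transpose B *v x 0))"
  have orth: "column j B \<bullet> column j' B = 0" if "j \<noteq> j'" for j j'
    using arg_cong[OF gram, of "\<lambda>M. M $ j $ j'"] that
    by (simp add: matrix_mult_transpose_dot_column mat_def)
  have nonzero: "column j B \<noteq> 0" for j
    using arg_cong[OF gram, of "\<lambda>M. M $ j $ j"] c
    by (auto simp: matrix_mult_transpose_dot_column mat_def)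
  have column_kernel: "Lk k *v column j B = 0" for k j
    using kernel[of k "axis j 1"] by (simp add: matrix_vector_mult_basis)
  have "Lk k *v xstar = 0" for k by (simp add: xstar_def matrix_vector_mult_scaleR kernel)
  then interpret error: switched_flow tk Lk L "\<lambda>t. x t - xstar" by (rule shift_by_common_kernel)
  have perp: "column j B \<bullet> (x t - xstar) = 0" if "0 \<le> t" for j t
    using inner_common_kernel_const[OF column_kernel that] inner_column_projection[OF gram c]
    by (simp add: xstar_def inner_diff_right)
  have "(norm (x (tk (kl (Suc l))) - xstar))\<^sup>2 \<le> q * (norm (x (tk (kl l)) - xstar))\<^sup>2" for l
    using norm_le_on_orthogonal_complement_of_fixed[OF orth nonzero
        Phi_fixes_common_kernel[OF column_kernel]
        transpose_Phi_fixes_common_kernel[OF column_kernel Lk_symmetric] mu q(2) perp[OF tk_nonneg]]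
      error.eq_Phi_at_switching_times[of "kl l" "kl (Suc l)"] strict_monoD[OF kl(1), of l "Suc l"]
    by simp
  then have "((\<lambda>t. x t - xstar) \<longlongrightarrow> 0) at_top" by (rule error.tendsto_zero_if_contracting[OF kl q])
  then show ?thesis by (simp add: xstar_def LIM_zero_iff)
qed

end

section \<open>Signed consensus states\<close>

lemma transpose_sign_diag: "transpose (sign_diag s) = sign_diag s"
  by (auto simp: sign_diag_def transpose_def vec_eq_iff)

lemma sign_diag_mult_self:
  assumes "\<And>i. s i * s i = 1"
  shows "sign_diag s ** sign_diag s = (mat 1 :: real^('n::finite \<times> 'd::finite)^('n \<times> 'd))"
proof -
  have "(\<Sum>r\<in>UNIV. (if p = r then s (fst p) else 0) * (if r = q then s (fst r) else 0))
      = (\<Sum>r\<in>UNIV. if r = p then (if p = q then s (fst p) * s (fst p) else 0) else 0)"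
    for p q :: "'n \<times> 'd"
    by (rule sum.cong) auto
  then have "(\<Sum>r\<in>UNIV. (if p = r then s (fst p) else 0) * (if r = q then s (fst r) else 0))
      = (if p = q then 1 else 0)" for p q :: "'n \<times> 'd"
    by (simp add: assms)
  then have "(sign_diag s ** sign_diag s) $ p $ q = (mat 1 :: real^('n \<times> 'd)^('n \<times> 'd)) $ p $ q" for p q
    by (simp add: matrix_matrix_mult_def sign_diag_def mat_def)
  then show ?thesis by (simp add: vec_eq_iff)
qed

lemma gram_ones_kron:
  "transpose (ones_kron M) ** (ones_kron M :: real^'c::finite^('n::finite \<times> 'd::finite))
    = real CARD('n) *\<^sub>R (transpose M ** M)"
  by (simp add: vec_eq_iff matrix_matrix_mult_def transpose_def ones_kron_def sum_UNIV_prod)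

lemma gram_sign_diag_ones_kron:
  fixes \<Psi> :: "real^'m::finite^'d::finite" and s :: "'n::finite \<Rightarrow> real"
  assumes "transpose \<Psi> ** \<Psi> = mat 1" and "\<And>i. s i = 1 \<or> s i = -1"
  defines "B \<equiv> sign_diag s ** (ones_kron \<Psi> :: real^'m^('n \<times> 'd))"
  shows "transpose B ** B = real CARD('n) *\<^sub>R mat 1"
proof -
  have "sign_diag s ** sign_diag s = (mat 1 :: real^('n \<times> 'd)^('n \<times> 'd))"
    using assms(2) by (intro sign_diag_mult_self) (metis mult_1 mult_minus1 minus_minus)
  moreover have "transpose B ** B
      = transpose (ones_kron \<Psi>) ** ((sign_diag s ** sign_diag s) ** (ones_kron \<Psi> :: real^'m^('n \<times> 'd)))"
    by (simp add: B_def matrix_transpose_mul transpose_sign_diag matrix_mul_assoc)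
  ultimately show ?thesis by (simp add: gram_ones_kron assms(1))
qed

lemma sign_diag_matrix_vector_mult_nth: "(sign_diag s *v u) $ (i, a) = s i * u $ (i, a)"
proof -
  have "(sign_diag s *v u) $ (i, a) = (\<Sum>q\<in>UNIV. (if (i, a) = q then s (fst (i, a)) else 0) * u $ q)"
    unfolding sign_diag_def matrix_vector_mult_def by simp
  also have "\<dots> = (\<Sum>q\<in>UNIV. if (i, a) = q then s i * u $ q else 0)" by (rule sum.cong) auto
  finally show ?thesis by simp
qed

lemma ones_kron_vec_matrix_vector_mult:
  "ones_kron_vec (M *v y) = (ones_kron M *v y :: real^('n::finite \<times> 'd::finite))"
  by (simp add: vec_eq_iff ones_kron_vec_def ones_kron_def matrix_vector_mult_def)

lemma ones_kron_vec_scaleR: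
  "ones_kron_vec (c *\<^sub>R v) = (c *\<^sub>R ones_kron_vec v :: real^('n::finite \<times> 'd::finite))"
  by (simp add: vec_eq_iff ones_kron_vec_def)

lemma sign_diag_ones_kron_vec_eq_projection:
  fixes \<Psi> :: "real^'m::finite^'d::finite" and s :: "'n::finite \<Rightarrow> real"
  defines "B \<equiv> sign_diag s ** (ones_kron \<Psi> :: real^'m^('n \<times> 'd))"
  shows "sign_diag s *v ones_kron_vec
      (c *\<^sub>R (\<Psi> *v (transpose (ones_kron \<Psi> :: real^'m^('n \<times> 'd)) *v (sign_diag s *v y))))
    = c *\<^sub>R (B *v (transpose B *v y))"
proof -
  have "transpose (ones_kron \<Psi> :: real^'m^('n \<times> 'd)) *v (sign_diag s *v y) = transpose B *v y"
    by (simp add: B_def matrix_transpose_mul transpose_sign_diag matrix_vector_mul_assoc)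
  then show ?thesis
    by (simp add: B_def ones_kron_vec_scaleR ones_kron_vec_matrix_vector_mult
        matrix_vector_mult_scaleR matrix_vector_mul_assoc[of "sign_diag s"])
qed

lemma agent_sign_diag_ones_kron_vec: "agent (sign_diag s *v ones_kron_vec v) i = s i *\<^sub>R v"
  by (simp add: vec_eq_iff agent_def sign_diag_matrix_vector_mult_nth ones_kron_vec_def)

lemma bipartite_consensus_of_signed_limit:
  fixes x :: "real \<Rightarrow> real^('n::finite \<times> 'd::finite)"
  assumes lim: "(x \<longlongrightarrow> xstar) at_top" and agents: "\<And>i. agent xstar i = s i *\<^sub>R v"
    and sign: "\<And>i. s i = 1 \<or> s i = -1" and not_consensus: "\<exists>i j. agent xstar i \<noteq> agent xstar j"
  shows "bipartite_consensus x"
proof -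
  have agent_lim: "((\<lambda>t. agent (x t) i) \<longlongrightarrow> agent xstar i) at_top" for i
    unfolding agent_def by (intro tendsto_vec_lambda tendsto_vec_nth lim)
  have Lim: "Lim at_top (\<lambda>t. agent (x t) i) = s i *\<^sub>R v" for i
    using tendsto_Lim[OF trivial_limit_at_top_linorder agent_lim[of i]] by (simp add: agents)
  obtain i0 j0 where "s i0 *\<^sub>R v \<noteq> s j0 *\<^sub>R v" using not_consensus by (auto simp: agents)
  then have "s i0 \<noteq> s j0" and "v \<noteq> 0" by auto
  define S where "S = {i. s i = 1}"
  have s_S: "s i = (if i \<in> S then 1 else -1)" for i using sign[of i] by (auto simp: S_def)
  have "S \<noteq> {}" "S \<noteq> UNIV" using \<open>s i0 \<noteq> s j0\<close> s_S[of i0] s_S[of j0] by auto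
  moreover have "v \<noteq> - v"
  proof
    assume "v = - v"
    then have "2 *\<^sub>R v = 0" by (metis scaleR_2 add.right_inverse)
    then show False using \<open>v \<noteq> 0\<close> by simp
  qed
  ultimately show ?thesis
    unfolding bipartite_consensus_def using agent_lim by (intro conjI exI[of _ S]) (auto simp: Lim s_S)
qed

lemma switched_flow_of_network:
  fixes A :: "real \<Rightarrow> 'n::finite \<Rightarrow> 'n \<Rightarrow> real^'d::finite^'d" and x :: "real \<Rightarrow> real^('n \<times> 'd)"
  assumes sym_blocks: "\<And>t i j. t \<ge> 0 \<Longrightarrow> transpose (A t i j) = A t i j"
    and sym_graph: "\<And>t i j. t \<ge> 0 \<Longrightarrow> A t i j = A t j i"
    and sign_type: "\<And>i j. (\<forall>t\<ge>0. psd (A t i j)) \<or> (\<forall>t\<ge>0. nsd (A t i j))"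
    and t0: "tk 0 = 0" and alpha_pos: "\<alpha> > 0" and dwell: "\<And>k. tk (Suc k) - tk k \<ge> \<alpha>"
    and tk_inf: "filterlim tk at_top sequentially"
    and piecewise_const: "\<And>k t. tk k \<le> t \<Longrightarrow> t < tk (Suc k) \<Longrightarrow> A t = A (tk k)"
    and x_cont: "continuous_on {0..} x"
    and x_ode: "\<And>t. t > 0 \<Longrightarrow> t \<notin> range tk \<Longrightarrow>
      (x has_vector_derivative (- (laplacian (A t) *v x t))) (at t)"
  shows "switched_flow tk (\<lambda>k. laplacian (A (tk k))) (\<lambda>t. laplacian (A t)) x"
proof -
  interpret switching_times tk
  proof unfold_locales
    show "tk k < tk (Suc k)" for k using dwell[of k] alpha_pos by linarith
  qed (use t0 tk_inf in auto)
  show ?thesis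
  proof unfold_locales
    fix k
    show "transpose (laplacian (A (tk k))) = laplacian (A (tk k))"
      using sym_blocks sym_graph tk_nonneg[of k] by (intro laplacian_symmetric) auto
    have "psd (A (tk k) i j) \<or> nsd (A (tk k) i j)" for i j
      using sign_type[of i j] tk_nonneg[of k] by blast
    then show "psd (laplacian (A (tk k)))"
      using sym_blocks sym_graph tk_nonneg[of k] by (intro psd_laplacian) auto
  qed (use piecewise_const x_cont x_ode in auto)
qed

theorem corollary14:
  fixes A :: "real \<Rightarrow> 'n::finite \<Rightarrow> 'n \<Rightarrow> real^'d::finite^'d"
    and tk :: "nat \<Rightarrow> real" and \<alpha> :: real
    and \<Psi> :: "real^'m::finite^'d"
    and s :: "'n \<Rightarrow> real"
    and kl :: "nat \<Rightarrow> nat" and q :: real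
    and x :: "real \<Rightarrow> real^('n \<times> 'd)"
  defines "L \<equiv> (\<lambda>t. laplacian (A t))"
      and "Lk \<equiv> (\<lambda>k. laplacian (A (tk k)))"
      and "C \<equiv> (sign_diag s :: real^('n \<times> 'd)^('n \<times> 'd))"
  assumes n_gt1: "CARD('n) \<ge> 2"
    and sym_blocks: "\<And>t i j. t \<ge> 0 \<Longrightarrow> transpose (A t i j) = A t i j"
    and sym_graph: "\<And>t i j. t \<ge> 0 \<Longrightarrow> A t i j = A t j i"
    and no_loops: "\<And>t i. t \<ge> 0 \<Longrightarrow> A t i i = 0"
    and sign_type: "\<And>i j. (\<forall>t\<ge>0. psd (A t i j)) \<or> (\<forall>t\<ge>0. nsd (A t i j))"
    and t0: "tk 0 = 0"
    and alpha_pos: "\<alpha> > 0"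
    and dwell: "\<And>k. tk (Suc k) - tk k \<ge> \<alpha>"
    and tk_inf: "filterlim tk at_top sequentially"
    and piecewise_const: "\<And>k t. tk k \<le> t \<Longrightarrow> t < tk (Suc k) \<Longrightarrow> A t = A (tk k)"
    and Psi_orth: "transpose \<Psi> ** \<Psi> = mat 1"
    and s_sign: "\<And>i. s i = 1 \<or> s i = -1"
    and kl_mono: "strict_mono kl" and kl0: "kl 0 = 0"
    and q_range: "0 < q" "q < 1"
    and null_cond: "\<And>l. null_space (avg_lap L (tk (kl l)) (tk (kl (Suc l))))
                         = col_space (C ** (ones_kron \<Psi> :: real^'m^('n \<times> 'd)))"
    and contr_cond: "\<And>l. mu (CARD('m) + 1)
            (transpose (Phi Lk tk (kl (Suc l)) (kl l)) ** Phi Lk tk (kl (Suc l)) (kl l)) \<le> q"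
    and x_cont: "continuous_on {0..} x"
    and x_ode: "\<And>t. t > 0 \<Longrightarrow> t \<notin> range tk \<Longrightarrow>
                   (x has_vector_derivative (- (L t *v x t))) (at t)"
  shows "(let xstar = C *v ones_kron_vec
                ((1 / real CARD('n)) *\<^sub>R
                  (\<Psi> *v (transpose (ones_kron \<Psi> :: real^'m^('n \<times> 'd)) *v (C *v x 0))))
          in (x \<longlongrightarrow> xstar) at_top \<and>
             ((\<exists>i j. agent xstar i \<noteq> agent xstar j) \<longrightarrow> bipartite_consensus x))"
proof -
  define B where "B = C ** (ones_kron \<Psi> :: real^'m^('n \<times> 'd))"
  define v where "v = (1 / real CARD('n)) *\<^sub>R
    (\<Psi> *v (transpose (ones_kron \<Psi> :: real^'m^('n \<times> 'd)) *v (C *v x 0)))"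
  interpret switched_flow tk Lk L x
    unfolding L_def Lk_def
    by (rule switched_flow_of_network[OF sym_blocks sym_graph sign_type t0 alpha_pos dwell tk_inf
          piecewise_const x_cont x_ode[unfolded L_def]])
  have gram: "transpose B ** B = real CARD('n) *\<^sub>R mat 1"
    unfolding B_def C_def by (rule gram_sign_diag_ones_kron[OF Psi_orth s_sign])
  have kernel: "Lk k *v (B *v y) = 0" for k y
    using null_cond by (intro kernel_Lk_of_kernel_avg_laps[OF kl_mono kl0])
      (auto simp: null_space_def col_space_def B_def)
  have projection: "C *v ones_kron_vec v = (1 / real CARD('n)) *\<^sub>R (B *v (transpose B *v x 0))"
    unfolding v_def B_def C_def by (rule sign_diag_ones_kron_vec_eq_projection)
  have lim: "(x \<longlongrightarrow> C *v ones_kron_vec v) at_top"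
    unfolding projection
    by (rule tendsto_orthogonal_projection[OF gram _ kernel kl_mono kl0 less_imp_le[OF q_range(1)]
          q_range(2)]) (simp, rule contr_cond)
  have agents: "agent (C *v ones_kron_vec v) i = s i *\<^sub>R v" for i
    by (simp add: C_def agent_sign_diag_ones_kron_vec)
  have "(\<exists>i j. agent (C *v ones_kron_vec v) i \<noteq> agent (C *v ones_kron_vec v) j)
      \<longrightarrow> bipartite_consensus x"
    using bipartite_consensus_of_signed_limit[OF lim agents s_sign] by blast
  with lim show ?thesis unfolding Let_def v_def[symmetric] by blast
qed

end
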